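(* Consider an $N$-player game where player $i$ has a convex compact set $X_i\subseteq\mathbb{R}^{n_i}$ and a real-valued objective $f_i$ with $f_i(\cdot,x_{-i})$ $\rho_i$-weakly convex on $\mathbb{R}^{n_i}$ for every $x_{-i}$, and let $0<\eta<\min_i\rho_i^{-1}$. Suppose that for every $i$ and $x_{-i}$ the subdifferential map $\partial_{x_i}f_i(\cdot,x_{-i})$ is $L_i$-Lipschitz. Let $x^*\in X$ be a QNE of the Moreau-smoothed game, i.e. $\nabla_{x_i}f_i^\eta(x_i^*,x_{-i}^* )^\top(x_i-x_i^* )\ge0$ for all $x_i\in X_i$ and all $i$, and suppose $\|\nabla_{x_i}f_i^\eta(x_i^*,x_{-i}^* )\|\le M^*$ for all $i$. Then $x^*$ is an $\eta LDM^*$-QNE of the original game, where $L\triangleq\max_iL_i$ and $D\triangleq\max_i\operatorname{diam}(X_i)$.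
   Context: A function $g$ is $\rho$-weakly convex if $g+\frac\rho2\|\cdot\|^2$ is convex; its subdifferential is $\partial g(x)=\partial(g+\frac\rho2\|\cdot\|^2)(x)-\rho x$. $f_i^\eta(x_i,x_{-i})\triangleq\min_{y\in\mathbb{R}^{n_i}}\{f_i(y,x_{-i})+\frac1{2\eta}\|y-x_i\|^2\}$ is the Moreau envelope in $x_i$ (differentiable in $x_i$ for $\eta<\rho_i^{-1}$). A set-valued map $F$ is $L$-Lipschitz if $F(u)\subseteq F(v)+L\|u-v\|\mathbb{B}$ for all $u,v$, with $\mathbb{B}$ the closed unit ball. For $\epsilon\ge0$, $x^*\in X$ is an $\epsilon$-QNE of the original game if for every $i$, $f_i'(x_i^*,x_{-i}^*;x_i-x_i^* )\ge-\epsilon$ for all $x_i\in X_i$, where $f_i'(\cdot,x_{-i}^*;d)$ is the directional derivative of $f_i(\cdot,x^*_{-i})$. *)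

theory Defs
  imports "HOL-Analysis.Analysis"
begin

text \<open>Joint strategy profiles live in real^'j; the coordinate set 'j is partitioned
 into blocks B i, and player i's space R^(n_i) (n_i = card (B i)) is the coordinate
 subspace subsp (B i).\<close>

definition subsp :: "'j::finite set \<Rightarrow> (real^'j) set" where
  "subsp B = {y. \<forall>j. j \<notin> B \<longrightarrow> y$j = 0}"

definition blk :: "'j::finite set \<Rightarrow> real^'j \<Rightarrow> real^'j" where
  "blk B x = (\<chi> j. if j \<in> B then x$j else 0)"

definition upd :: "'j::finite set \<Rightarrow> real^'j \<Rightarrow> real^'j \<Rightarrow> real^'j" where
  "upd B x y = (\<chi> j. if j \<in> B then y$j else x$j)"

definition weakly_convex_on :: "'a::real_inner set \<Rightarrow> real \<Rightarrow> ('a \<Rightarrow> real) \<Rightarrow> bool" where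
  "weakly_convex_on S \<rho> g \<longleftrightarrow> convex_on S (\<lambda>z. g z + \<rho>/2 * (norm z)^2)"

definition conv_subdiff :: "'a::real_inner set \<Rightarrow> ('a \<Rightarrow> real) \<Rightarrow> 'a \<Rightarrow> 'a set" where
  "conv_subdiff S h y = {v \<in> S. \<forall>z\<in>S. h y + v \<bullet> (z - y) \<le> h z}"

definition wc_subdiff :: "'a::real_inner set \<Rightarrow> real \<Rightarrow> ('a \<Rightarrow> real) \<Rightarrow> 'a \<Rightarrow> 'a set" where
  "wc_subdiff S \<rho> g y = (\<lambda>v. v - \<rho> *\<^sub>R y) ` conv_subdiff S (\<lambda>z. g z + \<rho>/2 * (norm z)^2) y"

definition set_lipschitz_on :: "'a::real_normed_vector set \<Rightarrow> real \<Rightarrow> ('a \<Rightarrow> 'a set) \<Rightarrow> bool" where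
  "set_lipschitz_on S L F \<longleftrightarrow>
     (\<forall>u\<in>S. \<forall>v\<in>S. F u \<subseteq> {a + b | a b. a \<in> F v \<and> norm b \<le> L * dist u v})"

definition moreau :: "'a::real_normed_vector set \<Rightarrow> ('a \<Rightarrow> real) \<Rightarrow> real \<Rightarrow> 'a \<Rightarrow> real" where
  "moreau S g \<eta> x = (INF y\<in>S. g y + 1/(2*\<eta>) * (norm (y - x))^2)"

end

theory Submission
  imports Defs
begin

(* The gradient v of the Moreau envelope at x equals (x - p)/eta for the proximal point p of x,
   and v is a subgradient of the weakly convex objective at p = x - eta v. The Lipschitz
   subdifferential moves this subgradient back to x at the cost of a vector of norm at most
   L eta |v| <= L eta M. The one-sided directional derivative of a weakly convex function
   dominates a . d for every subgradient a, and v . d >= 0 in every feasible direction d at a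
   QNE of the smoothed game; with |d| <= D this gives the lower bound - eta L D M. *)

lemma subspace_subsp: "subspace (subsp B)"
  unfolding subspace_def subsp_def by auto

lemma blk_in_subsp: "blk B x \<in> subsp B"
  by (simp add: subsp_def blk_def)

lemma blk_subsp: "y \<in> subsp B \<Longrightarrow> blk B y = y"
  by (auto simp: subsp_def blk_def vec_eq_iff)

lemma linear_blk: "linear (blk B)"
  by (rule linearI) (auto simp: blk_def vec_eq_iff)

lemma upd_blk: "upd B x (blk B x) = x"
  by (simp add: upd_def blk_def vec_eq_iff)

lemma axis_in_subsp: "j \<in> B \<Longrightarrow> axis j 1 \<in> subsp B"
  by (simp add: subsp_def axis_def)

lemma convex_on_subsp_imp_continuous:
  assumes "convex_on (subsp B) h"
  shows "continuous_on (subsp B) h"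
proof -
  have "convex_on UNIV (h \<circ> blk B)"
  proof
    fix t :: real and x y :: "real^'a"
    assume "0 < t" "t < 1"
    then show "(h \<circ> blk B) ((1 - t) *\<^sub>R x + t *\<^sub>R y) \<le> (1 - t) * (h \<circ> blk B) x + t * (h \<circ> blk B) y"
      using convex_onD[OF assms, of t "blk B x" "blk B y"]
      by (simp add: linear_add[OF linear_blk] linear_scale[OF linear_blk] blk_in_subsp)
  qed simp
  then have "continuous_on (subsp B) (h \<circ> blk B)"
    by (intro continuous_on_subset[OF convex_on_continuous]) auto
  then show ?thesis
    by (rule continuous_on_eq) (simp add: blk_subsp)
qed

lemma weakly_convex_on_subsp_imp_continuous:
  assumes "weakly_convex_on (subsp B) \<rho> g"
  shows "continuous_on (subsp B) g"
proof -
  have "continuous_on (subsp B) (\<lambda>z. g z + \<rho>/2 * (norm z)\<^sup>2)"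
    using assms unfolding weakly_convex_on_def by (rule convex_on_subsp_imp_continuous)
  then have "continuous_on (subsp B) (\<lambda>z. (g z + \<rho>/2 * (norm z)\<^sup>2) - \<rho>/2 * (norm z)\<^sup>2)"
    by (rule continuous_on_diff) (intro continuous_intros)
  then show ?thesis
    by simp
qed

lemma norm_add_scaleR_square:
  fixes x d :: "'a::real_inner"
  shows "(norm (x + t *\<^sub>R d))\<^sup>2 = (norm x)\<^sup>2 + 2 * t * (x \<bullet> d) + t\<^sup>2 * (norm d)\<^sup>2"
  unfolding power2_norm_eq_inner
  by (simp add: inner_add_left inner_add_right inner_commute power2_eq_square algebra_simps)

lemma conv_subdiff_directional_derivative:
  fixes h :: "'a::real_inner \<Rightarrow> real"
  assumes cvx: "convex_on S h" and S: "subspace S" and x: "x \<in> S" and d: "d \<in> S"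
    and u: "u \<in> conv_subdiff S h x"
  shows "\<exists>l. ((\<lambda>t. (h (x + t *\<^sub>R d) - h x) / t) \<longlongrightarrow> l) (at_right 0) \<and> u \<bullet> d \<le> l"
proof -
  define Q where "Q t = (h (x + t *\<^sub>R d) - h x) / t" for t
  have line: "x + t *\<^sub>R d \<in> S" for t
    using S x d by (simp add: subspace_add subspace_scale)
  have Q_ge: "u \<bullet> d \<le> Q t" if "0 < t" for t
  proof -
    have "h x + u \<bullet> (t *\<^sub>R d) \<le> h (x + t *\<^sub>R d)"
      using u line[of t] unfolding conv_subdiff_def by fastforce
    with that show ?thesis
      by (simp add: Q_def field_simps)
  qed
  have Q_mono: "Q s \<le> Q t" if "0 < s" "s \<le> t" for s t
  proof -
    have "x + s *\<^sub>R d = (1 - s/t) *\<^sub>R x + (s/t) *\<^sub>R (x + t *\<^sub>R d)"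
      using that by (simp add: algebra_simps)
    then have "h (x + s *\<^sub>R d) \<le> (1 - s/t) * h x + (s/t) * h (x + t *\<^sub>R d)"
      using convex_onD[OF cvx, of "s/t" x "x + t *\<^sub>R d"] that x line by simp
    with that show ?thesis
      by (simp add: Q_def field_simps)
  qed
  have "(Q \<longlongrightarrow> Inf (Q ` ({0<..} \<inter> {0<..}))) (at 0 within ({0<..} \<inter> {0<..}))"
    by (rule Lim_right_bound[where K="u \<bullet> d"]) (use Q_mono Q_ge in auto)
  moreover have "u \<bullet> d \<le> Inf (Q ` {0<..})"
    by (rule cInf_greatest) (use Q_ge in auto)
  ultimately show ?thesis
    unfolding Q_def by auto
qed

lemma wc_subdiff_directional_derivative:
  fixes g :: "'a::real_inner \<Rightarrow> real"
  assumes wc: "weakly_convex_on S \<rho> g" and S: "subspace S" and x: "x \<in> S" and d: "d \<in> S"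
    and w: "w \<in> wc_subdiff S \<rho> g x"
  shows "\<exists>l. ((\<lambda>t. (g (x + t *\<^sub>R d) - g x) / t) \<longlongrightarrow> l) (at_right 0) \<and> w \<bullet> d \<le> l"
proof -
  define h where "h z = g z + \<rho>/2 * (norm z)\<^sup>2" for z
  obtain u where u: "u \<in> conv_subdiff S h x" and w_eq: "w = u - \<rho> *\<^sub>R x"
    using w unfolding wc_subdiff_def h_def by auto
  have "convex_on S h"
    using wc unfolding weakly_convex_on_def h_def .
  then obtain l where l: "((\<lambda>t. (h (x + t *\<^sub>R d) - h x) / t) \<longlongrightarrow> l) (at_right 0)" "u \<bullet> d \<le> l"
    using conv_subdiff_directional_derivative[OF _ S x d u] by blast
  have "((\<lambda>t. (h (x + t *\<^sub>R d) - h x) / t - \<rho> * (x \<bullet> d) - \<rho>/2 * t * (norm d)\<^sup>2)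
      \<longlongrightarrow> l - \<rho> * (x \<bullet> d) - \<rho>/2 * 0 * (norm d)\<^sup>2) (at_right 0)"
    by (intro tendsto_intros l(1))
  moreover have "\<forall>\<^sub>F t in at_right 0.
      (h (x + t *\<^sub>R d) - h x) / t - \<rho> * (x \<bullet> d) - \<rho>/2 * t * (norm d)\<^sup>2 = (g (x + t *\<^sub>R d) - g x) / t"
  proof (rule eventually_at_right_less[THEN eventually_mono])
    fix t :: real
    assume "0 < t"
    then show "(h (x + t *\<^sub>R d) - h x) / t - \<rho> * (x \<bullet> d) - \<rho>/2 * t * (norm d)\<^sup>2
        = (g (x + t *\<^sub>R d) - g x) / t"
      unfolding h_def norm_add_scaleR_square by (simp add: field_simps power2_eq_square)
  qed
  ultimately have "((\<lambda>t. (g (x + t *\<^sub>R d) - g x) / t) \<longlongrightarrow> l - \<rho> * (x \<bullet> d)) (at_right 0)"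
    by (simp add: tendsto_cong)
  moreover have "w \<bullet> d \<le> l - \<rho> * (x \<bullet> d)"
    using l(2) by (simp add: w_eq inner_diff_left)
  ultimately show ?thesis
    by blast
qed

lemma has_derivative_along_line:
  fixes f :: "'a::real_normed_vector \<Rightarrow> real"
  assumes "(f has_derivative f') (at x within S)" and "\<And>t. x + t *\<^sub>R d \<in> S"
  shows "((\<lambda>t. f (x + t *\<^sub>R d)) has_real_derivative f' d) (at 0)"
proof -
  have "((\<lambda>t. x + t *\<^sub>R d) has_derivative (\<lambda>t. t *\<^sub>R d)) (at 0)"
    by (auto intro!: derivative_eq_intros)
  moreover have "(f has_derivative f') (at ((\<lambda>t. x + t *\<^sub>R d) 0) within range (\<lambda>t. x + t *\<^sub>R d))"
    using has_derivative_subset[OF assms(1)] assms(2) by (simp add: image_subset_iff)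
  ultimately have "((\<lambda>t. f (x + t *\<^sub>R d)) has_derivative (\<lambda>t. f' (t *\<^sub>R d))) (at 0)"
    by (rule has_derivative_in_compose[unfolded comp_def])
  moreover have "(\<lambda>t. f' (t *\<^sub>R d)) = (*) (f' d)"
    using has_derivative_linear[OF assms(1)] by (simp add: linear_scale fun_eq_iff)
  ultimately show ?thesis
    by (simp add: has_field_derivative_def)
qed

lemma has_derivative_eq_if_touching_above:
  fixes f \<phi> :: "'a::real_normed_vector \<Rightarrow> real"
  assumes f: "(f has_derivative f') (at x within S)" and \<phi>: "(\<phi> has_derivative \<phi>') (at x)"
    and le: "\<And>y. y \<in> S \<Longrightarrow> f y \<le> \<phi> y" and eq: "f x = \<phi> x"
    and S: "subspace S" and x: "x \<in> S" and d: "d \<in> S"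
  shows "f' d = \<phi>' d"
proof -
  have line: "x + t *\<^sub>R d \<in> S" for t
    using S x d by (simp add: subspace_add subspace_scale)
  have "((\<lambda>t. \<phi> (x + t *\<^sub>R d) - f (x + t *\<^sub>R d)) has_real_derivative \<phi>' d - f' d) (at 0)"
    by (intro DERIV_diff has_derivative_along_line[OF \<phi>] has_derivative_along_line[OF f] line)
      simp
  then have "\<phi>' d - f' d = 0"
  proof (rule DERIV_local_min[where d=1])
    show "\<forall>t. \<bar>0 - t\<bar> < 1 \<longrightarrow> \<phi> (x + 0 *\<^sub>R d) - f (x + 0 *\<^sub>R d) \<le> \<phi> (x + t *\<^sub>R d) - f (x + t *\<^sub>R d)"
      using le line eq by simp
  qed simp
  then show ?thesis
    by simp
qed

lemma conv_subdiff_of_min_convex_plus_smooth: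
  fixes h q :: "'a::real_normed_vector \<Rightarrow> real"
  assumes cvx: "convex_on S h" and q: "(q has_derivative q') (at p)"
    and p: "p \<in> S" and min: "\<And>z. z \<in> S \<Longrightarrow> h p + q p \<le> h z + q z" and z: "z \<in> S"
  shows "h p - q' (z - p) \<le> h z"
proof -
  define e where "e = z - p"
  have "((\<lambda>t. q (p + t *\<^sub>R e)) has_real_derivative q' e) (at 0)"
    using has_derivative_along_line[OF q] by simp
  then have "((\<lambda>t. (q (p + t *\<^sub>R e) - q p) / t) \<longlongrightarrow> q' e) (at_right 0)"
    unfolding DERIV_def filterlim_at_split by simp
  moreover have "\<forall>\<^sub>F t in at_right 0. h p - h z \<le> (q (p + t *\<^sub>R e) - q p) / t"
  proof (rule eventually_at_rightI[of 0 1])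
    fix t :: real
    assume t: "t \<in> {0<..<1}"
    have pt: "p + t *\<^sub>R e = (1 - t) *\<^sub>R p + t *\<^sub>R z"
      by (simp add: e_def algebra_simps)
    then have "p + t *\<^sub>R e \<in> S"
      using convex_on_imp_convex[OF cvx] p z t by (simp add: convexD)
    then have "h p + q p \<le> h (p + t *\<^sub>R e) + q (p + t *\<^sub>R e)"
      by (rule min)
    moreover have "h (p + t *\<^sub>R e) \<le> (1 - t) * h p + t * h z"
      unfolding pt using convex_onD[OF cvx] p z t by simp
    ultimately show "h p - h z \<le> (q (p + t *\<^sub>R e) - q p) / t"
      using t by (simp add: field_simps)
  qed simp
  ultimately have "h p - h z \<le> q' e"
    by (rule tendsto_lowerbound) (simp add: trivial_limit_at_right_real)
  then show ?thesis
    unfolding e_def by linarith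
qed

definition is_prox :: "'a::real_normed_vector set \<Rightarrow> ('a \<Rightarrow> real) \<Rightarrow> real \<Rightarrow> 'a \<Rightarrow> 'a \<Rightarrow> bool" where
  "is_prox S g \<eta> x p \<longleftrightarrow> p \<in> S \<and>
     (\<forall>z\<in>S. g p + 1/(2*\<eta>) * (norm (p - x))\<^sup>2 \<le> g z + 1/(2*\<eta>) * (norm (z - x))\<^sup>2)"

lemma quadratic_dominates_affine:
  fixes \<alpha> \<beta> K :: real
  assumes "\<alpha> > 0"
  shows "\<exists>R. \<forall>r>R. \<beta> * r + K < \<alpha> * r\<^sup>2"
proof (intro exI allI impI)
  fix r :: real
  assume r: "(\<bar>\<beta>\<bar> + \<bar>K\<bar>) / \<alpha> + 1 < r"
  have "1 \<le> (\<bar>\<beta>\<bar> + \<bar>K\<bar>) / \<alpha> + 1"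
    using assms by simp
  with r have "1 < r"
    by linarith
  from r have "\<bar>\<beta>\<bar> + \<bar>K\<bar> < \<alpha> * r"
    using assms by (simp add: field_simps)
  then have "(\<bar>\<beta>\<bar> + \<bar>K\<bar>) * r < \<alpha> * r * r"
    using \<open>1 < r\<close> by (intro mult_strict_right_mono) simp_all
  moreover have "\<beta> * r \<le> \<bar>\<beta>\<bar> * r"
    using \<open>1 < r\<close> by (intro mult_right_mono) simp_all
  moreover have "\<bar>K\<bar> * 1 \<le> \<bar>K\<bar> * r"
    using \<open>1 < r\<close> by (intro mult_left_mono) simp_all
  moreover have "K \<le> \<bar>K\<bar>"
    by simp
  ultimately show "\<beta> * r + K < \<alpha> * r\<^sup>2"
    unfolding power2_eq_square distrib_right mult.assoc by linarith
qed

lemma continuous_attains_inf_coercive: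
  fixes \<Phi> :: "'a::heine_borel \<Rightarrow> real"
  assumes S: "closed S" and cont: "continuous_on S \<Phi>" and y: "y \<in> S"
    and far: "\<And>z. z \<in> S \<Longrightarrow> R < dist z y \<Longrightarrow> \<Phi> y < \<Phi> z"
  shows "\<exists>p\<in>S. \<forall>z\<in>S. \<Phi> p \<le> \<Phi> z"
proof -
  have "\<not> R < 0"
    using far[OF y] by auto
  then have y_in: "y \<in> S \<inter> cball y R"
    using y by simp
  have "compact (S \<inter> cball y R)"
    using S by (simp add: closed_Int_compact)
  then obtain p where p: "p \<in> S \<inter> cball y R" and p_min: "\<And>z. z \<in> S \<inter> cball y R \<Longrightarrow> \<Phi> p \<le> \<Phi> z"
    using continuous_attains_inf[OF _ _ continuous_on_subset[OF cont inf_le1]] y_in by blast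
  have "\<Phi> p \<le> \<Phi> z" if "z \<in> S" for z
  proof (cases "dist z y \<le> R")
    case True
    with that show ?thesis
      by (intro p_min) (simp add: dist_commute)
  next
    case False
    with far[OF that] p_min[OF y_in] show ?thesis
      by simp
  qed
  with p show ?thesis
    by blast
qed

lemma convex_on_lower_bound_linear_growth:
  fixes h :: "'a::euclidean_space \<Rightarrow> real"
  assumes cvx: "convex_on S h" and cont: "continuous_on S h" and S: "closed S" and y: "y \<in> S"
  shows "\<exists>K\<ge>0. \<forall>z\<in>S. h y - K * (1 + norm (z - y)) \<le> h z"
proof -
  have "compact (S \<inter> cball y 1)"
    using S by (simp add: closed_Int_compact)
  then obtain m where "\<And>w. w \<in> S \<inter> cball y 1 \<Longrightarrow> h m \<le> h w"
    using continuous_attains_inf[OF _ _ continuous_on_subset[OF cont inf_le1]] y by fastforce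
  then have m: "\<And>w. w \<in> S \<Longrightarrow> norm (w - y) \<le> 1 \<Longrightarrow> h m \<le> h w"
    by (simp add: dist_norm norm_minus_commute)
  define K where "K = h y - h m"
  have "0 \<le> K"
    using m[OF y] by (simp add: K_def)
  moreover have "h y - K * (1 + norm (z - y)) \<le> h z" if z: "z \<in> S" for z
  proof (cases "norm (z - y) \<le> 1")
    case True
    have "K \<le> K * (1 + norm (z - y))"
      using \<open>0 \<le> K\<close> by (simp add: mult_le_cancel_left1)
    with m[OF z True] show ?thesis
      by (simp add: K_def)
  next
    case False
    define r where "r = norm (z - y)"
    have r: "1 < r"
      using False by (simp add: r_def)
    define w where "w = (1 - 1/r) *\<^sub>R y + (1/r) *\<^sub>R z"
    have "w - y = (1/r) *\<^sub>R (z - y)"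
      by (simp add: w_def algebra_simps)
    then have "norm (w - y) = 1"
      using r by (auto simp: r_def)
    moreover have "w \<in> S"
      unfolding w_def using convex_on_imp_convex[OF cvx] y z r by (simp add: convexD)
    ultimately have "h m \<le> h w"
      using m by simp
    also have "h w \<le> (1 - 1/r) * h y + (1/r) * h z"
      unfolding w_def using convex_onD[OF cvx, of "1/r" y z] y z r by simp
    finally have "h y - r * K \<le> h z"
      using r by (simp add: K_def field_simps)
    moreover have "r * K \<le> K * (1 + r)"
      using \<open>0 \<le> K\<close> by (simp add: algebra_simps)
    ultimately show ?thesis
      unfolding r_def by linarith
  qed
  ultimately show ?thesis
    by blast
qed

lemma is_prox_exists:
  fixes g :: "'a::euclidean_space \<Rightarrow> real"
  assumes wc: "weakly_convex_on S \<rho> g" and cont: "continuous_on S g" and S: "closed S"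
    and \<eta>: "0 < \<eta>" "\<eta> * \<rho> < 1" and x: "x \<in> S"
  shows "\<exists>p. is_prox S g \<eta> x p"
proof -
  define h where "h z = g z + \<rho>/2 * (norm z)\<^sup>2" for z
  define \<Phi> where "\<Phi> z = g z + 1/(2*\<eta>) * (norm (z - x))\<^sup>2" for z
  have "convex_on S h"
    using wc unfolding weakly_convex_on_def h_def .
  moreover have "continuous_on S h"
    unfolding h_def by (intro continuous_intros cont)
  ultimately obtain K where K: "0 \<le> K" "\<And>z. z \<in> S \<Longrightarrow> h x - K * (1 + norm (z - x)) \<le> h z"
    using convex_on_lower_bound_linear_growth[OF _ _ S x] by meson
  define \<alpha> where "\<alpha> = 1/(2*\<eta>) - \<rho>/2"
  have "0 < \<alpha>"
    using \<eta> by (simp add: \<alpha>_def field_simps)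
  then obtain R where R: "\<And>r. R < r \<Longrightarrow> (K + \<bar>\<rho>\<bar> * norm x) * r + K < \<alpha> * r\<^sup>2"
    using quadratic_dominates_affine by blast
  have "\<Phi> x < \<Phi> z" if z: "z \<in> S" and far: "R < dist z x" for z
  proof -
    define r where "r = norm (z - x)"
    have nz: "(norm z)\<^sup>2 = (norm x)\<^sup>2 + 2 * (x \<bullet> (z - x)) + r\<^sup>2"
      using norm_add_scaleR_square[of x 1 "z - x"] by (simp add: r_def)
    have "\<rho>/2 * ((norm z)\<^sup>2 - (norm x)\<^sup>2) = \<rho> * (x \<bullet> (z - x)) + \<rho>/2 * r\<^sup>2"
      unfolding nz by (simp add: algebra_simps)
    moreover have "\<rho> * (x \<bullet> (z - x)) \<le> \<bar>\<rho>\<bar> * \<bar>x \<bullet> (z - x)\<bar>"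
      by (metis abs_ge_self abs_mult)
    moreover have "\<bar>\<rho>\<bar> * \<bar>x \<bullet> (z - x)\<bar> \<le> \<bar>\<rho>\<bar> * norm x * r"
      unfolding r_def mult.assoc by (intro mult_left_mono Cauchy_Schwarz_ineq2) simp
    moreover have "(K + \<bar>\<rho>\<bar> * norm x) * r + K < \<alpha> * r\<^sup>2"
      using R far by (simp add: r_def dist_norm)
    moreover have "(K + \<bar>\<rho>\<bar> * norm x) * r + K = K * (1 + r) + \<bar>\<rho>\<bar> * norm x * r"
      by (simp add: algebra_simps)
    moreover have "1/(2*\<eta>) * r\<^sup>2 = \<alpha> * r\<^sup>2 + \<rho>/2 * r\<^sup>2"
      by (simp add: \<alpha>_def algebra_simps)
    ultimately have "K * (1 + r) + \<rho>/2 * ((norm z)\<^sup>2 - (norm x)\<^sup>2) < 1/(2*\<eta>) * r\<^sup>2"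
      by linarith
    with K(2)[OF z] show ?thesis
      unfolding \<Phi>_def h_def r_def by (simp add: algebra_simps)
  qed
  moreover have "continuous_on S \<Phi>"
    unfolding \<Phi>_def by (intro continuous_intros cont)
  ultimately obtain p where "p \<in> S" "\<And>z. z \<in> S \<Longrightarrow> \<Phi> p \<le> \<Phi> z"
    using continuous_attains_inf_coercive[OF S _ x] by blast
  then show ?thesis
    by (auto simp: is_prox_def \<Phi>_def)
qed

lemma moreau_le:
  assumes "is_prox S g \<eta> y q" and "z \<in> S"
  shows "moreau S g \<eta> y \<le> g z + 1/(2*\<eta>) * (norm (z - y))\<^sup>2"
  unfolding moreau_def
proof (rule cInf_lower)
  show "bdd_below ((\<lambda>z. g z + 1/(2*\<eta>) * (norm (z - y))\<^sup>2) ` S)"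
    using assms(1) by (auto simp: is_prox_def bdd_below_def)
qed (use assms(2) in simp)

lemma moreau_eq_is_prox:
  assumes "is_prox S g \<eta> x p"
  shows "moreau S g \<eta> x = g p + 1/(2*\<eta>) * (norm (p - x))\<^sup>2"
  unfolding moreau_def by (rule cInf_eq_minimum) (use assms in \<open>auto simp: is_prox_def\<close>)

lemma is_prox_in_wc_subdiff:
  fixes g :: "'a::real_inner \<Rightarrow> real"
  assumes wc: "weakly_convex_on S \<rho> g" and S: "subspace S" and x: "x \<in> S"
    and p: "is_prox S g \<eta> x p"
  shows "(1/\<eta>) *\<^sub>R (x - p) \<in> wc_subdiff S \<rho> g p"
proof -
  define c where "c = (1/\<eta>) *\<^sub>R (x - p)"
  define h where "h y = g y + \<rho>/2 * (norm y)\<^sup>2" for y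
  \<comment> \<open>the prox objective splits as the convex h plus the smooth quadratic q\<close>
  define q where "q y = 1/(2*\<eta>) * ((y - x) \<bullet> (y - x)) - \<rho>/2 * (y \<bullet> y)" for y
  have p_in: "p \<in> S"
    using p by (simp add: is_prox_def)
  have "convex_on S h"
    using wc unfolding weakly_convex_on_def h_def .
  moreover have "(q has_derivative (\<lambda>e. - ((c + \<rho> *\<^sub>R p) \<bullet> e))) (at p)"
  proof -
    have "(q has_derivative
        (\<lambda>e. 1/(2*\<eta>) * (e \<bullet> (p - x) + (p - x) \<bullet> e) - \<rho>/2 * (e \<bullet> p + p \<bullet> e))) (at p)"
      unfolding q_def by (intro derivative_eq_intros) auto
    moreover have "(\<lambda>e. 1/(2*\<eta>) * (e \<bullet> (p - x) + (p - x) \<bullet> e) - \<rho>/2 * (e \<bullet> p + p \<bullet> e))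
        = (\<lambda>e. - ((c + \<rho> *\<^sub>R p) \<bullet> e))"
      by (simp add: fun_eq_iff c_def inner_commute inner_add_left inner_diff_left algebra_simps)
    ultimately show ?thesis
      by simp
  qed
  moreover have "h p + q p \<le> h z + q z" if "z \<in> S" for z
    using p that by (simp add: is_prox_def h_def q_def power2_norm_eq_inner)
  ultimately have "h p + (c + \<rho> *\<^sub>R p) \<bullet> (z - p) \<le> h z" if "z \<in> S" for z
    using conv_subdiff_of_min_convex_plus_smooth[OF _ _ p_in _ that] by fastforce
  moreover have "c + \<rho> *\<^sub>R p \<in> S"
    using S x p_in by (simp add: c_def subspace_add subspace_diff subspace_scale)
  ultimately have "c + \<rho> *\<^sub>R p \<in> conv_subdiff S h p"
    by (simp add: conv_subdiff_def)
  then have "(c + \<rho> *\<^sub>R p) - \<rho> *\<^sub>R p \<in> wc_subdiff S \<rho> g p"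
    unfolding wc_subdiff_def h_def by blast
  then show ?thesis
    by (simp add: c_def)
qed

lemma moreau_gradient_eq_prox:
  fixes g :: "'a::real_inner \<Rightarrow> real"
  assumes S: "subspace S" and prox: "\<And>y. y \<in> S \<Longrightarrow> \<exists>q. is_prox S g \<eta> y q"
    and p: "is_prox S g \<eta> x p" and x: "x \<in> S" and v: "v \<in> S"
    and der: "(moreau S g \<eta> has_derivative (\<lambda>h. v \<bullet> h)) (at x within S)"
  shows "v = (1/\<eta>) *\<^sub>R (x - p)"
proof -
  define c where "c = (1/\<eta>) *\<^sub>R (x - p)"
  \<comment> \<open>the envelope is touched from above at x by the quadratic through the fixed prox point p\<close>
  define \<phi> where "\<phi> y = g p + 1/(2*\<eta>) * ((p - y) \<bullet> (p - y))" for y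
  have p_in: "p \<in> S"
    using p by (simp add: is_prox_def)
  have "(\<phi> has_derivative (\<lambda>e. 1/(2*\<eta>) * (- (e \<bullet> (p - x)) - (p - x) \<bullet> e))) (at x)"
    unfolding \<phi>_def by (intro derivative_eq_intros) auto
  moreover have "(\<lambda>e. 1/(2*\<eta>) * (- (e \<bullet> (p - x)) - (p - x) \<bullet> e)) = (\<lambda>e. c \<bullet> e)"
    by (simp add: fun_eq_iff c_def inner_commute inner_diff_left algebra_simps)
  ultimately have \<phi>_der: "(\<phi> has_derivative (\<lambda>e. c \<bullet> e)) (at x)"
    by simp
  have "moreau S g \<eta> y \<le> \<phi> y" if "y \<in> S" for y
    using prox[OF that] moreau_le[OF _ p_in]
    by (auto simp: \<phi>_def power2_norm_eq_inner)
  moreover have "moreau S g \<eta> x = \<phi> x"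
    using moreau_eq_is_prox[OF p] by (simp add: \<phi>_def power2_norm_eq_inner)
  moreover have "v - c \<in> S"
    using S x p_in v by (simp add: c_def subspace_diff subspace_scale)
  ultimately have "v \<bullet> (v - c) = c \<bullet> (v - c)"
    using has_derivative_eq_if_touching_above[OF der \<phi>_der _ _ S x] by blast
  then have "(v - c) \<bullet> (v - c) = 0"
    by (simp add: inner_diff_left)
  then show ?thesis
    by (simp add: c_def)
qed

lemma moreau_gradient_in_wc_subdiff:
  fixes g :: "'a::euclidean_space \<Rightarrow> real"
  assumes wc: "weakly_convex_on S \<rho> g" and cont: "continuous_on S g" and S: "subspace S"
    and \<eta>: "0 < \<eta>" "\<eta> * \<rho> < 1" and x: "x \<in> S" and v: "v \<in> S"
    and der: "(moreau S g \<eta> has_derivative (\<lambda>h. v \<bullet> h)) (at x within S)"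
  shows "v \<in> wc_subdiff S \<rho> g (x - \<eta> *\<^sub>R v)"
proof -
  have prox: "\<exists>q. is_prox S g \<eta> y q" if "y \<in> S" for y
    using is_prox_exists[OF wc cont closed_subspace[OF S] \<eta> that] .
  then obtain p where p: "is_prox S g \<eta> x p"
    using x by blast
  have "v = (1/\<eta>) *\<^sub>R (x - p)"
    by (rule moreau_gradient_eq_prox[OF S prox p x v der])
  then have "x - \<eta> *\<^sub>R v = p"
    using \<eta> by simp
  with is_prox_in_wc_subdiff[OF wc S x p] \<open>v = (1/\<eta>) *\<^sub>R (x - p)\<close> show ?thesis
    by simp
qed

lemma set_lipschitz_on_nonneg:
  assumes lip: "set_lipschitz_on S L F" and "u \<in> S" "w \<in> S" "u \<noteq> w" "F u \<noteq> {}"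
  shows "0 \<le> L"
proof -
  obtain y where "y \<in> F u"
    using \<open>F u \<noteq> {}\<close> by blast
  then have "y \<in> {a + b | a b. a \<in> F w \<and> norm b \<le> L * dist u w}"
    using lip \<open>u \<in> S\<close> \<open>w \<in> S\<close> unfolding set_lipschitz_on_def by blast
  then have "0 \<le> L * dist u w"
    by (auto intro: order_trans[OF norm_ge_zero])
  with \<open>u \<noteq> w\<close> show ?thesis
    by (simp add: zero_le_mult_iff)
qed

lemma moreau_gradient_dir_deriv_bound:
  fixes g :: "'a::euclidean_space \<Rightarrow> real"
  assumes wc: "weakly_convex_on S \<rho> g" and cont: "continuous_on S g" and S: "subspace S"
    and \<eta>: "0 < \<eta>" "\<eta> * \<rho> < 1" and lip: "set_lipschitz_on S L (wc_subdiff S \<rho> g)"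
    and x: "x \<in> S" and v: "v \<in> S" and d: "d \<in> S"
    and der: "(moreau S g \<eta> has_derivative (\<lambda>h. v \<bullet> h)) (at x within S)"
  shows "\<exists>l. ((\<lambda>t. (g (x + t *\<^sub>R d) - g x) / t) \<longlongrightarrow> l) (at_right 0)
           \<and> v \<bullet> d - \<eta> * L * norm v * norm d \<le> l"
proof -
  have "v \<in> wc_subdiff S \<rho> g (x - \<eta> *\<^sub>R v)"
    by (rule moreau_gradient_in_wc_subdiff[OF wc cont S \<eta> x v der])
  moreover have "x - \<eta> *\<^sub>R v \<in> S"
    using S x v by (simp add: subspace_diff subspace_scale)
  ultimately obtain a b where ab: "v = a + b" and a: "a \<in> wc_subdiff S \<rho> g x"
    and b: "norm b \<le> L * dist (x - \<eta> *\<^sub>R v) x"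
    using lip x unfolding set_lipschitz_on_def by blast
  obtain l where l: "((\<lambda>t. (g (x + t *\<^sub>R d) - g x) / t) \<longlongrightarrow> l) (at_right 0)" "a \<bullet> d \<le> l"
    using wc_subdiff_directional_derivative[OF wc S x d a] by blast
  have "b \<bullet> d \<le> norm b * norm d"
    by (rule order_trans[OF abs_ge_self Cauchy_Schwarz_ineq2])
  also have "\<dots> \<le> \<eta> * L * norm v * norm d"
    using b \<eta> by (intro mult_right_mono) (simp_all add: dist_norm ac_simps)
  finally have "v \<bullet> d - \<eta> * L * norm v * norm d \<le> a \<bullet> d"
    by (simp add: ab inner_add_left)
  with l show ?thesis
    by auto
qed

lemma moreau_gradient_lipschitz_nonneg:
  fixes g :: "'a::euclidean_space \<Rightarrow> real"
  assumes wc: "weakly_convex_on S \<rho> g" and cont: "continuous_on S g" and S: "subspace S"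
    and \<eta>: "0 < \<eta>" "\<eta> * \<rho> < 1" and lip: "set_lipschitz_on S L (wc_subdiff S \<rho> g)"
    and x: "x \<in> S" and v: "v \<in> S" and e: "e \<in> S" "e \<noteq> 0"
    and der: "(moreau S g \<eta> has_derivative (\<lambda>h. v \<bullet> h)) (at x within S)"
  shows "0 \<le> L"
proof (rule set_lipschitz_on_nonneg[OF lip])
  show "x - \<eta> *\<^sub>R v \<in> S" and "x - \<eta> *\<^sub>R v + e \<in> S"
    using S x v e by (simp_all add: subspace_add subspace_diff subspace_scale)
  show "wc_subdiff S \<rho> g (x - \<eta> *\<^sub>R v) \<noteq> {}"
    using moreau_gradient_in_wc_subdiff[OF wc cont S \<eta> x v der] by blast
qed (use e in simp)

theorem theorem4p2:
  fixes B :: "'i::finite \<Rightarrow> 'j::finite set"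
    and X :: "'i \<Rightarrow> (real^'j) set"
    and f :: "'i \<Rightarrow> real^'j \<Rightarrow> real"
    and \<rho> Lc :: "'i \<Rightarrow> real"
    and \<eta> M :: real
    and xstar :: "real^'j"
  assumes disj: "\<forall>i k. i \<noteq> k \<longrightarrow> B i \<inter> B k = {}"
    and cover: "(\<Union>i. B i) = UNIV"
    and Xi: "\<forall>i. X i \<subseteq> subsp (B i) \<and> convex (X i) \<and> compact (X i)"
    and rho_nonneg: "\<forall>i. \<rho> i \<ge> 0"
    and wc: "\<forall>i x. weakly_convex_on (subsp (B i)) (\<rho> i) (\<lambda>y. f i (upd (B i) x y))"
    and eta_pos: "\<eta> > 0"
    and eta_small: "\<forall>i. \<eta> * \<rho> i < 1"
    and lip: "\<forall>i x. set_lipschitz_on (subsp (B i)) (Lc i)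
                 (wc_subdiff (subsp (B i)) (\<rho> i) (\<lambda>y. f i (upd (B i) x y)))"
    and xstar_in: "\<forall>i. blk (B i) xstar \<in> X i"
    and qne: "\<forall>i. \<exists>v \<in> subsp (B i).
                ((\<lambda>y. moreau (subsp (B i)) (\<lambda>z. f i (upd (B i) xstar z)) \<eta> y)
                   has_derivative (\<lambda>h. v \<bullet> h)) (at (blk (B i) xstar) within subsp (B i))
              \<and> (\<forall>xi\<in>X i. v \<bullet> (xi - blk (B i) xstar) \<ge> 0)
              \<and> norm v \<le> M"
  shows "\<forall>i. \<forall>xi\<in>X i. \<exists>l.
           ((\<lambda>t. (f i (upd (B i) xstar (blk (B i) xstar + t *\<^sub>R (xi - blk (B i) xstar)))
                   - f i xstar) / t) \<longlongrightarrow> l) (at_right 0)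
           \<and> l \<ge> - (\<eta> * Max (range Lc) * Max ((\<lambda>i. diameter (X i)) ` UNIV) * M)"
proof -
  define g where "g i z = f i (upd (B i) xstar z)" for i z
  define xb where "xb i = blk (B i) xstar" for i
  define L where "L = Max (range Lc)"
  define D where "D = Max ((\<lambda>i. diameter (X i)) ` UNIV)"
  have wc_g: "weakly_convex_on (subsp (B i)) (\<rho> i) (g i)" for i
    unfolding g_def using wc by blast
  note player = wc_g weakly_convex_on_subsp_imp_continuous[OF wc_g] subspace_subsp eta_pos
    eta_small[rule_format] lip[rule_format, of _ xstar, folded g_def]
  obtain v where v: "\<And>i. v i \<in> subsp (B i)"
    and der: "\<And>i. (moreau (subsp (B i)) (g i) \<eta> has_derivative (\<lambda>h. v i \<bullet> h))
                 (at (xb i) within subsp (B i))"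
    and v_dir: "\<And>i xi. xi \<in> X i \<Longrightarrow> 0 \<le> v i \<bullet> (xi - xb i)"
    and v_M: "\<And>i. norm (v i) \<le> M"
    using qne unfolding g_def xb_def by metis
  have xb: "xb i \<in> subsp (B i)" for i
    by (simp add: xb_def blk_in_subsp)
  have "0 \<le> L"
  proof -
    obtain k j where "j \<in> B k"
      using cover by blast
    then have "axis j 1 \<in> subsp (B k)" and "axis j (1::real) \<noteq> 0"
      by (simp_all add: axis_in_subsp)
    then have "0 \<le> Lc k"
      by (rule moreau_gradient_lipschitz_nonneg[OF player xb v _ _ der])
    moreover have "Lc k \<le> L"
      by (simp add: L_def)
    ultimately show ?thesis
      by linarith
  qed
  have "\<exists>l. ((\<lambda>t. (g i (xb i + t *\<^sub>R (xi - xb i)) - g i (xb i)) / t) \<longlongrightarrow> l) (at_right 0)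
      \<and> - (\<eta> * L * D * M) \<le> l" if xi: "xi \<in> X i" for i xi
  proof -
    have "xi - xb i \<in> subsp (B i)"
      using xi Xi xb by (blast intro: subspace_diff subspace_subsp)
    then obtain l where lim: "((\<lambda>t. (g i (xb i + t *\<^sub>R (xi - xb i)) - g i (xb i)) / t) \<longlongrightarrow> l) (at_right 0)"
      and l: "v i \<bullet> (xi - xb i) - \<eta> * Lc i * norm (v i) * norm (xi - xb i) \<le> l"
      using moreau_gradient_dir_deriv_bound[OF player xb v _ der] by blast
    have "xb i \<in> X i"
      using xstar_in by (simp add: xb_def)
    then have "norm (xi - xb i) \<le> D"
      using xi Xi diameter_bounded_bound[OF compact_imp_bounded, of "X i" xi "xb i"]
      by (auto simp: D_def dist_norm intro: order_trans)
    then have "\<eta> * norm (v i) * norm (xi - xb i) \<le> \<eta> * M * D"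
      using eta_pos v_M order_trans[OF norm_ge_zero v_M] by (intro mult_mono mult_left_mono) auto
    then have "Lc i * (\<eta> * norm (v i) * norm (xi - xb i)) \<le> L * (\<eta> * M * D)"
      by (rule mult_mono[rotated]) (use \<open>0 \<le> L\<close> eta_pos in \<open>auto simp: L_def\<close>)
    with lim l v_dir[OF xi] show ?thesis
      by (auto simp: algebra_simps)
  qed
  then show ?thesis
    by (simp add: g_def xb_def L_def D_def upd_blk)
qed

end
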